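(* Let $\ell\ge 2$ be an integer and let $\mathbf{a}=(a_1,\ldots,a_\ell)\in\mathbf{Z}^\ell$ with $\sum_{j=1}^\ell a_j=0$. Put $\lambda=\pi_\ell(\mathbf{a})$ and $k=\lambda_1$ (so $\lambda\in\mathcal{C}_\ell^k$). Let $i$ be the largest index such that $a_i=\max\{a_1,\ldots,a_\ell\}$. Then \[ \pi_{\ell-1}^{-1}\big(\Phi_\ell^k(\lambda)\big)=\psi_{\ell-1}^{\,a_i}\big(a_1,\ldots,a_{i-1},a_{i+1},\ldots,a_\ell\big), \] where $\psi_{\ell-1}^{\,a_i}$ denotes the $a_i$-fold iterate of $\psi_{\ell-1}$ (note $a_i\ge 0$).
   Context: Partitions are drawn as Young diagrams in English notation; box $(x,y)$ lies in row $x$ and column $y$. The hook length $h^{\lambda}_{(a,c)}$ of a box $(a,c)$ of $\lambda$ is the number of boxes of $\lambda$ in row $a$ weakly to the right of $(a,c)$ plus the number of boxes of $\lambda$ in column $c$ strictly below $(a,c)$. For an integer $m\ge 1$, a partition is an $m$-core if no box has hook length divisible by $m$. $\mathcal{C}_m$ denotes the set of $m$-cores, $\mathcal{C}_m^k$ those with first part equal to $k$, and $\mathcal{C}_m^{\le k}$ those with first part $\le k$. For $m\ge1$ and $\mathbf{c}=(c_1,\ldots,c_m)\in\mathbf{Z}^m$ with $\sum c_j=0$, let $X(\mathbf{c})=\{rm+(j-1): 1\le j\le m,\ r\in\mathbf{Z},\ r\le c_j\}\subset\mathbf{Z}$, and let $\pi_m(\mathbf{c})$ be the partition whose nonzero parts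 (in weakly decreasing order) are the positive values among the numbers $\#\{y\in\mathbf{Z}\setminus X(\mathbf{c}): y<x\}$, $x\in X(\mathbf{c})$. It is known that $\pi_m$ is a bijection from $\{\mathbf{c}\in\mathbf{Z}^m:\sum c_j=0\}$ onto $\mathcal{C}_m$. For $\lambda\in\mathcal{C}_\ell^k$, $\Phi_\ell^k(\lambda)$ is the partition obtained from the Young diagram of $\lambda$ by deleting every row $x$ with $h^\lambda_{(x,1)}\equiv h^\lambda_{(1,1)}\pmod{\ell}$ (in particular row 1); it is known that $\Phi_\ell^k$ is a bijection $\mathcal{C}_\ell^k\to\mathcal{C}_{\ell-1}^{\le k}$. For $m\ge1$, $\psi_m:\mathbf{Z}^m\to\mathbf{Z}^m$ is the map $\psi_m(c_1,\ldots,c_m)=(c_m+1,c_1,c_2,\ldots,c_{m-1})$. *)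

theory Defs
  imports Main
begin

text \<open>A vector \<open>c \<in> Z^m\<close> is a list of integers of length m;
  its j-th coordinate (1-based) is \<open>c ! (j-1)\<close>.
  A partition is a list of positive naturals in weakly decreasing order
  (its nonzero parts); row x (1-based) has length \<open>lam ! (x-1)\<close>.\<close>

definition Xset :: "nat \<Rightarrow> int list \<Rightarrow> int set" where
  "Xset m c = {r * int m + (int j - 1) | j r. 1 \<le> j \<and> j \<le> m \<and> r \<le> c ! (j - 1)}"

definition gapcount :: "nat \<Rightarrow> int list \<Rightarrow> int \<Rightarrow> nat" where
  "gapcount m c x = card {y :: int. y \<notin> Xset m c \<and> y < x}"

definition pi_core :: "nat \<Rightarrow> int list \<Rightarrow> nat list" where
  "pi_core m c = rev (sort (map (gapcount m c)
      (sorted_list_of_set {x \<in> Xset m c. 0 < gapcount m c x})))"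

definition hook :: "nat list \<Rightarrow> nat \<Rightarrow> nat \<Rightarrow> nat" where
  "hook lam a c = card {y. c \<le> y \<and> y \<le> lam ! (a - 1)}
                 + card {x. a < x \<and> x \<le> length lam \<and> c \<le> lam ! (x - 1)}"

text \<open>\<open>Phi_l^k\<close> (k = first part of lam): delete every row x with
  \<open>h(x,1) \<equiv> h(1,1) (mod l)\<close>.\<close>
definition Phi :: "nat \<Rightarrow> nat list \<Rightarrow> nat list" where
  "Phi l lam = map (\<lambda>x. lam ! (x - 1))
     (filter (\<lambda>x. hook lam x 1 mod l \<noteq> hook lam 1 1 mod l) [1..<length lam + 1])"

definition psi :: "int list \<Rightarrow> int list" where
  "psi c = (last c + 1) # butlast c"

end

theory Submission
  imports Defs "HOL-Library.Multiset"
begin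

text \<open>Read \<open>X(c)\<close> as a Maya diagram. Its beads above the first gap \<open>g\<close> are the rows of
  \<open>\<pi>(c)\<close>: the row of bead \<open>b\<close> has as its part the number of gaps below \<open>b\<close>, and its
  first-column hook length is \<open>b - g\<close>. So \<open>\<Phi>\<close> deletes exactly the rows whose beads lie on the
  runner (residue class mod \<open>\<ell>\<close>) of the largest bead, and that bead sits on the runner of the
  last index where \<open>a\<close> is maximal. All gaps on this runner lie above the largest bead, so
  deleting the runner and closing up the other \<open>\<ell> - 1\<close> runners keeps the gap counts of the
  remaining beads: \<open>\<Phi>(\<pi>\<^sub>\<ell>(a)) = \<pi>\<^sub>\<ell>\<^sub>-\<^sub>1(a')\<close> with \<open>a'\<close> the vector \<open>a\<close> without that
  entry. Finally \<open>\<psi>\<close> translates \<open>X(c)\<close> by one and raises the coordinate sum by one, and a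
  Maya diagram is determined up to translation by its partition, so \<open>\<psi>\<^bsup>a\<^sub>i\<^esup>(a')\<close> is the unique
  sum-zero preimage.\<close>

section \<open>Maya sets and their partitions\<close>

definition maya_set :: "int set \<Rightarrow> bool" where
  "maya_set S \<longleftrightarrow> bdd_above S \<and> (\<exists>lo. {..<lo} \<subseteq> S)"

definition gaps_below :: "int set \<Rightarrow> int \<Rightarrow> nat" where
  "gaps_below S x = card {y. y \<notin> S \<and> y < x}"

definition active_beads :: "int set \<Rightarrow> int set" where
  "active_beads S = {x \<in> S. 0 < gaps_below S x}"

definition maya_partition :: "int set \<Rightarrow> nat list" where
  "maya_partition S = rev (sort (map (gaps_below S) (sorted_list_of_set (active_beads S))))"

lemma pi_core_eq_maya_partition: "pi_core m c = maya_partition (Xset m c)"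
proof -
  have "gapcount m c = gaps_below (Xset m c)"
    by (simp add: fun_eq_iff gapcount_def gaps_below_def)
  then show ?thesis
    by (simp add: pi_core_def maya_partition_def active_beads_def)
qed

lemma maya_setD:
  assumes "maya_set S"
  obtains lo u where "{..<lo} \<subseteq> S" "\<And>y. y \<in> S \<Longrightarrow> y \<le> u"
  using assms unfolding maya_set_def bdd_above_def by blast

lemma finite_gaps_below:
  assumes "maya_set S" shows "finite {y. y \<notin> S \<and> y < x}"
proof -
  obtain lo where "{..<lo} \<subseteq> S" using maya_setD[OF assms] by metis
  then have "{y. y \<notin> S \<and> y < x} \<subseteq> {lo..<x}" by force
  then show ?thesis by (rule finite_subset) simp
qed

lemma gaps_below_pos_iff:
  assumes "maya_set S" shows "0 < gaps_below S x \<longleftrightarrow> (\<exists>y. y \<notin> S \<and> y < x)"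
  using finite_gaps_below[OF assms, of x] by (auto simp: gaps_below_def card_gt_0_iff)

lemma gaps_below_mono:
  assumes "maya_set S" "x \<le> x'" shows "gaps_below S x \<le> gaps_below S x'"
  unfolding gaps_below_def using assms by (intro card_mono finite_gaps_below) auto

lemma finite_active_beads:
  assumes "maya_set S" shows "finite (active_beads S)"
proof -
  obtain lo u where lo: "{..<lo} \<subseteq> S" and u: "\<And>y. y \<in> S \<Longrightarrow> y \<le> u"
    using maya_setD[OF assms] by metis
  have "active_beads S \<subseteq> {lo..u}"
  proof
    fix x assume "x \<in> active_beads S"
    then obtain y where "x \<in> S" "y \<notin> S" "y < x"
      using gaps_below_pos_iff[OF assms] by (auto simp: active_beads_def)
    then show "x \<in> {lo..u}" using lo u by force
  qed
  then show ?thesis by (rule finite_subset) simp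
qed

lemma exists_first_gap:
  assumes "maya_set S" obtains g where "g \<notin> S" "{..<g} \<subseteq> S"
proof -
  obtain lo u where lo: "{..<lo} \<subseteq> S" and u: "\<And>y. y \<in> S \<Longrightarrow> y \<le> u"
    using maya_setD[OF assms] by metis
  define A where "A = {y. y \<notin> S \<and> y \<le> u + 1}"
  have "A \<subseteq> {lo..u + 1}" using lo by (force simp: A_def)
  then have "finite A" by (rule finite_subset) simp
  moreover have "u + 1 \<in> A" using u by (force simp: A_def)
  ultimately have "Min A \<in> A" "\<And>y. y \<in> A \<Longrightarrow> Min A \<le> y" by (auto intro: Min_in)
  then have "Min A \<notin> S" "{..<Min A} \<subseteq> S" by (force simp: A_def)+
  then show ?thesis by (rule that)
qed

lemma mem_translate_iff: "y \<in> (+) d ` S \<longleftrightarrow> y - d \<in> (S :: int set)"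
  by (auto simp: image_iff) (metis add.commute diff_add_cancel)

lemma mem_image_diff_iff: "y \<in> (\<lambda>x. x - d) ` S \<longleftrightarrow> y + d \<in> (S :: int set)"
  by force

lemma gaps_below_translate: "gaps_below ((+) d ` S) (d + x) = gaps_below S x"
proof -
  have "{y. y \<notin> (+) d ` S \<and> y < d + x} = (+) d ` {y. y \<notin> S \<and> y < x}"
    by (rule set_eqI) (auto simp: mem_translate_iff)
  then show ?thesis by (simp add: gaps_below_def card_image)
qed

lemma active_beads_translate: "active_beads ((+) d ` S) = (+) d ` active_beads S"
  unfolding active_beads_def using gaps_below_translate[of d S] by auto

lemma sort_map_sorted_list_of_set:
  "sort (map f (sorted_list_of_set A)) = sorted_list_of_multiset (image_mset f (mset_set A))"
  by (metis mset_map mset_sorted_list_of_multiset sorted_list_of_mset_set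
      sorted_list_of_multiset_mset)

lemma maya_partition_eqI:
  assumes "sorted xs" "mset xs = image_mset (gaps_below S) (mset_set (active_beads S))"
  shows "maya_partition S = rev xs"
  using assms by (simp add: maya_partition_def sort_map_sorted_list_of_set sorted_sort_id
      flip: assms(2))

lemma maya_partition_translate:
  "maya_partition ((+) d ` S) = maya_partition S"
proof -
  have "image_mset (gaps_below ((+) d ` S)) (mset_set (active_beads ((+) d ` S)))
      = image_mset (gaps_below S) (mset_set (active_beads S))"
    by (simp flip: image_mset_mset_set[OF inj_on_add]
        add: active_beads_translate multiset.map_comp comp_def gaps_below_translate)
  then show ?thesis
    by (simp add: maya_partition_def sort_map_sorted_list_of_set)
qed

lemma filter_less_nth_eq_take:
  fixes xs :: "'a::order list"
  assumes "sorted_wrt (<) xs" "k < length xs"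
  shows "filter (\<lambda>b. b < xs ! k) xs = take k xs"
proof -
  define ys zs where "ys = take k xs" and "zs = drop (Suc k) xs"
  have xs: "xs = ys @ xs ! k # zs"
    using assms(2) by (simp add: ys_def zs_def id_take_nth_drop)
  then have "sorted_wrt (<) (ys @ xs ! k # zs)" using assms(1) by simp
  then have "\<forall>b \<in> set ys. b < xs ! k" "\<forall>b \<in> set zs. xs ! k < b"
    by (simp_all add: sorted_wrt_append)
  then have "filter (\<lambda>b. b < xs ! k) (ys @ xs ! k # zs) = ys"
    by (auto intro!: filter_True filter_False dest: less_not_sym)
  then show ?thesis using xs ys_def by metis
qed

definition active_bead_list :: "int set \<Rightarrow> int list" where
  "active_bead_list S = sorted_list_of_set (active_beads S)"

lemma sorted_gaps_below_active_bead_list: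
  assumes "maya_set S" shows "sorted (map (gaps_below S) (active_bead_list S))"
  by (intro sorted_map_mono) (simp_all add: active_bead_list_def mono_on_def gaps_below_mono[OF assms])

lemma maya_partition_eq_active_bead_list:
  assumes "maya_set S"
  shows "maya_partition S = rev (map (gaps_below S) (active_bead_list S))"
  using sorted_gaps_below_active_bead_list[OF assms]
  by (simp add: maya_partition_def active_bead_list_def sorted_sort_id)

lemma hook_first_column:
  assumes "\<forall>p \<in> set lam. 0 < p"
  shows "hook lam x 1 = lam ! (x - 1) + (length lam - x)"
proof -
  have "{y. 1 \<le> y \<and> y \<le> lam ! (x - 1)} = {1..lam ! (x - 1)}" by auto
  moreover have "{x'. x < x' \<and> x' \<le> length lam \<and> 1 \<le> lam ! (x' - 1)} = {x<..length lam}"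
    using assms by (force simp: Suc_le_eq)
  ultimately show ?thesis by (simp add: hook_def)
qed

lemma map_filter_upt_nth:
  "map (\<lambda>x. f (ys ! (x - 1))) (filter (\<lambda>x. Q (ys ! (x - 1))) [1..<length ys + 1])
    = map f (filter Q ys)"
proof -
  have "[1..<length ys + 1] = map Suc [0..<length ys]" by (simp add: map_Suc_upt)
  then have "map (\<lambda>x. f (ys ! (x - 1))) (filter (\<lambda>x. Q (ys ! (x - 1))) [1..<length ys + 1])
      = map f (map ((!) ys) (filter (Q \<circ> (!) ys) [0..<length ys]))"
    by (simp add: filter_map comp_def)
  also have "\<dots> = map f (filter Q ys)"
    by (simp flip: filter_map add: map_nth)
  finally show ?thesis .
qed

lemma nat_diff_mod_eq_iff:
  fixes b c g :: int
  assumes "g < b" "g < c" "0 < l"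
  shows "nat (b - g) mod l = nat (c - g) mod l \<longleftrightarrow> b mod int l = c mod int l"
proof -
  have "nat (b - g) mod l = nat (c - g) mod l \<longleftrightarrow> int (nat (b - g) mod l) = int (nat (c - g) mod l)"
    by (rule of_nat_eq_iff[symmetric])
  also have "\<dots> \<longleftrightarrow> (b - g) mod int l = (c - g) mod int l"
    using assms by (simp add: of_nat_mod)
  also have "\<dots> \<longleftrightarrow> b mod int l = c mod int l"
    by (metis diff_add_cancel mod_add_cong mod_diff_cong)
  finally show ?thesis .
qed

locale maya_first_gap =
  fixes S :: "int set" and g :: int
  assumes maya: "maya_set S" and first_gap: "g \<notin> S" and below_first_gap: "{..<g} \<subseteq> S"
begin

abbreviation beads :: "int list" where "beads \<equiv> active_bead_list S"

lemma first_gap_le: "y \<notin> S \<Longrightarrow> g \<le> y"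
  using below_first_gap by force

lemma active_beads_iff: "x \<in> active_beads S \<longleftrightarrow> x \<in> S \<and> g < x"
proof -
  have "0 < gaps_below S x \<longleftrightarrow> g < x"
    using gaps_below_pos_iff[OF maya] first_gap first_gap_le by fastforce
  then show ?thesis by (simp add: active_beads_def)
qed

lemma set_beads: "set beads = active_beads S"
  by (simp add: active_bead_list_def finite_active_beads[OF maya])

lemma strict_sorted_beads: "sorted_wrt (<) beads"
  by (simp add: active_bead_list_def)

lemma bead_gt_first_gap: "b \<in> set beads \<Longrightarrow> b \<in> S \<and> g < b"
  using set_beads active_beads_iff by blast

text \<open>Every integer of \<open>[g, x)\<close> is either a gap or an active bead.\<close>
lemma gaps_below_add_card_beads_below:
  assumes "x \<in> S" "g < x"
  shows "int (gaps_below S x) + int (card {b \<in> active_beads S. b < x}) = x - g"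
proof -
  have "{g..<x} = {y. y \<notin> S \<and> y < x} \<union> {b \<in> active_beads S. b < x}"
    using first_gap first_gap_le active_beads_iff by force
  moreover have "finite {y. y \<notin> S \<and> y < x}" by (rule finite_gaps_below[OF maya])
  moreover have "finite {b \<in> active_beads S. b < x}" using finite_active_beads[OF maya] by simp
  ultimately have "card {g..<x} = gaps_below S x + card {b \<in> active_beads S. b < x}"
    unfolding gaps_below_def by (simp add: card_Un_disjoint active_beads_def disjoint_iff)
  then show ?thesis using assms(2) by simp
qed

lemma nth_beads:
  assumes "k < length beads"
  shows "beads ! k - g = int (gaps_below S (beads ! k)) + int k"
proof -
  have "{b \<in> active_beads S. b < beads ! k} = set (filter (\<lambda>b. b < beads ! k) beads)"
    by (auto simp: set_beads)
  also have "\<dots> = set (take k beads)"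
    by (simp add: filter_less_nth_eq_take[OF strict_sorted_beads assms])
  finally have "card {b \<in> active_beads S. b < beads ! k} = k"
    using assms strict_sorted_beads by (simp add: distinct_card strict_sorted_iff)
  moreover have "beads ! k \<in> S" "g < beads ! k"
    using bead_gt_first_gap assms by auto
  ultimately show ?thesis using gaps_below_add_card_beads_below by force
qed

lemma rev_maya_partition:
  "rev (maya_partition S) = map (gaps_below S) beads"
  by (simp add: maya_partition_eq_active_bead_list[OF maya])

lemma length_maya_partition: "length (maya_partition S) = length beads"
  by (simp add: maya_partition_eq_active_bead_list[OF maya])

text \<open>Translated so that its first gap is \<open>0\<close>, a Maya set depends only on its partition.\<close>
lemma translate_first_gap_eq:
  "(\<lambda>x. x - g) ` S
    = {..<0} \<union> (\<lambda>k. int (rev (maya_partition S) ! k) + int k) ` {..<length (maya_partition S)}"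
proof -
  have parts: "(\<lambda>k. int (rev (maya_partition S) ! k) + int k) ` {..<length (maya_partition S)}
      = (\<lambda>x. x - g) ` set beads"
    by (force simp: length_maya_partition nth_beads rev_maya_partition in_set_conv_nth)
  have "x \<in> S \<longleftrightarrow> x < g \<or> x \<in> set beads" for x
    using below_first_gap first_gap by (auto simp: set_beads active_beads_iff order.order_iff_strict)
  then show ?thesis
    unfolding parts by (auto simp: mem_image_diff_iff)
qed

lemma hook_maya_partition:
  assumes "1 \<le> x" "x \<le> length beads"
  shows "hook (maya_partition S) x 1 = nat (rev beads ! (x - 1) - g)"
proof -
  let ?k = "length beads - x"
  have k: "?k < length beads" using assms by simp
  have "\<forall>p \<in> set (maya_partition S). 0 < p"
    using set_beads by (auto simp: maya_partition_eq_active_bead_list[OF maya] active_beads_def)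
  then have "hook (maya_partition S) x 1 = maya_partition S ! (x - 1) + ?k"
    by (simp only: hook_first_column length_maya_partition)
  also have "\<dots> = gaps_below S (beads ! ?k) + ?k"
    using assms by (simp add: maya_partition_eq_active_bead_list[OF maya] rev_nth)
  also have "\<dots> = nat (beads ! ?k - g)"
    using nth_beads[OF k] by simp
  finally show ?thesis using assms by (simp add: rev_nth)
qed

lemma Phi_maya_partition:
  assumes "0 < l"
  shows "Phi l (maya_partition S)
    = rev (map (gaps_below S) (filter (\<lambda>b. b mod int l \<noteq> last beads mod int l) beads))"
proof (cases "beads = []")
  case True
  then show ?thesis by (simp add: Phi_def length_maya_partition)
next
  case False
  let ?lam = "maya_partition S" and ?rbs = "rev beads"
  let ?Q = "\<lambda>b. b mod int l \<noteq> last beads mod int l"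
  have hook_row: "hook ?lam x 1 mod l \<noteq> hook ?lam 1 1 mod l \<longleftrightarrow> ?Q (?rbs ! (x - 1))"
    if "x \<in> set [1..<length beads + 1]" for x
  proof -
    have x: "1 \<le> x" "x \<le> length beads" using that by auto
    then have "?rbs ! (x - 1) \<in> set beads" by (simp add: rev_nth)
    moreover have "?rbs ! 0 = last beads" using False by (simp add: rev_nth last_conv_nth)
    ultimately show ?thesis
      using hook_maya_partition[OF x] hook_maya_partition[of 1] x bead_gt_first_gap False
        nat_diff_mod_eq_iff[OF _ _ assms]
      by simp
  qed
  have "filter (\<lambda>x. hook ?lam x 1 mod l \<noteq> hook ?lam 1 1 mod l) [1..<length beads + 1]
      = filter (\<lambda>x. ?Q (?rbs ! (x - 1))) [1..<length beads + 1]"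
    by (rule filter_cong[OF refl hook_row])
  then have "Phi l ?lam = map (\<lambda>x. ?lam ! (x - 1))
      (filter (\<lambda>x. ?Q (?rbs ! (x - 1))) [1..<length beads + 1])"
    by (simp only: Phi_def length_maya_partition)
  also have "\<dots> = map (\<lambda>x. gaps_below S (?rbs ! (x - 1)))
      (filter (\<lambda>x. ?Q (?rbs ! (x - 1))) [1..<length beads + 1])"
    by (rule map_cong[OF refl])
      (auto simp: maya_partition_eq_active_bead_list[OF maya] rev_map)
  also have "\<dots> = map (gaps_below S) (filter ?Q ?rbs)"
    by (rule map_filter_upt_nth[of _ ?rbs, unfolded length_rev])
  also have "\<dots> = rev (map (gaps_below S) (filter ?Q beads))"
    by (simp add: rev_filter rev_map)
  finally show ?thesis .
qed

end

lemma maya_partition_eq_imp_translate: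
  assumes "maya_set S" "maya_set T" "maya_partition S = maya_partition T"
  shows "\<exists>d. T = (+) d ` S"
proof -
  obtain g h where "maya_first_gap S g" "maya_first_gap T h"
    using exists_first_gap assms(1,2) by (metis maya_first_gap.intro)
  then have normalized: "(\<lambda>x. x - g) ` S = (\<lambda>x. x - h) ` T"
    using assms(3) by (simp only: maya_first_gap.translate_first_gap_eq)
  have "x \<in> T \<longleftrightarrow> x - (h - g) \<in> S" for x
    using arg_cong[where f = "\<lambda>A. x - h \<in> A", OF normalized]
    by (simp add: mem_image_diff_iff algebra_simps)
  then have "T = (+) (h - g) ` S"
    by (auto simp: mem_translate_iff)
  then show ?thesis by blast
qed

section \<open>The abacus of an integer vector\<close>

lemma int_div_mod_decomp:
  assumes "0 < m" obtains q j where "y = q * int m + int j" "j < m"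
proof
  show "y = y div int m * int m + int (nat (y mod int m))" using assms by simp
  show "nat (y mod int m) < m" using assms by (simp add: nat_less_iff)
qed

lemma Xset_eq: "Xset m c = {r * int m + int j | r j. j < m \<and> r \<le> c ! j}"
proof (intro set_eqI iffI)
  fix y assume "y \<in> Xset m c"
  then obtain j r where "y = r * int m + (int j - 1)" "1 \<le> j" "j \<le> m" "r \<le> c ! (j - 1)"
    unfolding Xset_def by blast
  then show "y \<in> {r * int m + int j | r j. j < m \<and> r \<le> c ! j}"
    by (intro CollectI exI[of _ r] exI[of _ "j - 1"]) (simp add: of_nat_diff)
next
  fix y assume "y \<in> {r * int m + int j | r j. j < m \<and> r \<le> c ! j}"
  then obtain r j where "y = r * int m + int j" "j < m" "r \<le> c ! j" by blast
  then show "y \<in> Xset m c"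
    unfolding Xset_def by (intro CollectI exI[of _ "Suc j"] exI[of _ r]) simp
qed

lemma mem_Xset_iff:
  assumes "j < m" shows "r * int m + int j \<in> Xset m c \<longleftrightarrow> r \<le> c ! j"
proof -
  have "r = r' \<and> j = j'" if "r * int m + int j = r' * int m + int j'" "j' < m" for r' j'
  proof
    show "r = r'" using arg_cong[where f = "\<lambda>y. y div int m", OF that(1)] assms that(2) by simp
    show "j = j'" using arg_cong[where f = "\<lambda>y. y mod int m", OF that(1)] assms that(2) by simp
  qed
  then show ?thesis using assms by (auto simp: Xset_eq)
qed

lemma Xset_inject:
  assumes "length c = m" "length c' = m" "Xset m c = Xset m c'"
  shows "c = c'"
proof (rule nth_equalityI)
  show "length c = length c'" using assms by simp
  fix j assume "j < length c"
  then have "r \<le> c ! j \<longleftrightarrow> r \<le> c' ! j" for r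
    using mem_Xset_iff[of j m r c] mem_Xset_iff[of j m r c'] assms by simp
  from this[of "c ! j"] this[of "c' ! j"] show "c ! j = c' ! j" by simp
qed

lemma maya_set_Xset:
  assumes "0 < m" "length c = m" shows "maya_set (Xset m c)"
proof -
  define M N where "M = Max (set c)" and "N = Min (set c)"
  have bounds: "N \<le> c ! j" "c ! j \<le> M" if "j < m" for j
    using that assms by (simp_all add: M_def N_def)
  have "y \<le> (M + 1) * int m" if "y \<in> Xset m c" for y
  proof -
    obtain r j where y: "y = r * int m + int j" "j < m" "r \<le> c ! j"
      using \<open>y \<in> Xset m c\<close> by (auto simp: Xset_eq)
    then have "r * int m \<le> M * int m" using bounds(2) by (intro mult_right_mono) force+
    moreover have "int j < int m" using y(2) by simp
    ultimately have "y \<le> M * int m + int m" using y(1) by linarith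
    then show ?thesis by (simp add: algebra_simps)
  qed
  moreover have "y \<in> Xset m c" if "y < N * int m" for y
  proof -
    obtain q j where y: "y = q * int m + int j" "j < m" using int_div_mod_decomp[OF assms(1)] .
    then have "q * int m < N * int m" using that by linarith
    then have "q \<le> c ! j" using bounds(1)[OF y(2)] by (simp add: mult_less_cancel_right)
    then show ?thesis using y mem_Xset_iff by simp
  qed
  ultimately show ?thesis unfolding maya_set_def bdd_above_def by blast
qed

lemma length_psi: "c \<noteq> [] \<Longrightarrow> length (psi c) = length c"
  by (simp add: psi_def)

lemma sum_list_psi: "c \<noteq> [] \<Longrightarrow> sum_list (psi c) = sum_list c + 1"
  by (induction c rule: rev_induct) (simp_all add: psi_def)

lemma Xset_psi:
  assumes "0 < m" "length c = m"
  shows "Xset m (psi c) = (+) 1 ` Xset m c"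
proof (rule set_eqI)
  fix z
  obtain q j where z: "z - 1 = q * int m + int j" "j < m"
    using int_div_mod_decomp[OF assms(1)] .
  have old: "z - 1 \<in> Xset m c \<longleftrightarrow> q \<le> c ! j"
    using mem_Xset_iff[OF z(2), of q c] z(1) by simp
  have new: "z \<in> Xset m (psi c) \<longleftrightarrow> q \<le> c ! j"
  proof (cases "Suc j < m")
    case True
    have "z = q * int m + int (Suc j)" using z(1) by simp
    moreover have "psi c ! Suc j = c ! j" using True assms by (simp add: psi_def nth_butlast)
    ultimately show ?thesis using mem_Xset_iff[OF True, of q "psi c"] by simp
  next
    case False
    then have "j = m - 1" using z(2) by simp
    then have "z = (q + 1) * int m + int 0" and "psi c ! 0 = c ! j + 1"
      using assms z(1) by (auto simp: psi_def last_conv_nth algebra_simps of_nat_diff)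
    then show ?thesis using mem_Xset_iff[OF assms(1), of "q + 1" "psi c"] by simp
  qed
  show "z \<in> Xset m (psi c) \<longleftrightarrow> z \<in> (+) 1 ` Xset m c"
    using old new by (simp add: mem_translate_iff)
qed

lemma length_funpow_psi:
  assumes "c \<noteq> []" shows "length ((psi ^^ n) c) = length c"
proof (induction n)
  case (Suc n)
  then have "(psi ^^ n) c \<noteq> []" using assms by (metis length_0_conv)
  then show ?case using Suc by (simp add: length_psi)
qed simp

lemma sum_list_funpow_psi:
  assumes "c \<noteq> []" shows "sum_list ((psi ^^ n) c) = sum_list c + int n"
proof (induction n)
  case (Suc n)
  have "(psi ^^ n) c \<noteq> []" using length_funpow_psi[OF assms, of n] assms by auto
  then show ?case using Suc by (simp add: sum_list_psi)
qed simp

lemma Xset_funpow_psi: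
  assumes "0 < m" "length c = m"
  shows "Xset m ((psi ^^ n) c) = (+) (int n) ` Xset m c"
proof (induction n)
  case (Suc n)
  have "length ((psi ^^ n) c) = m" using assms length_funpow_psi by fastforce
  then show ?case by (simp add: Xset_psi[OF assms(1)] Suc image_image add_ac)
qed simp

lemma Xset_translate_imp_eq:
  assumes "0 < m" "length c = m" "length c' = m" "sum_list c = sum_list c'"
    and "Xset m c' = (+) d ` Xset m c" "0 \<le> d"
  shows "c' = c"
proof -
  have "c \<noteq> []" using assms(1,2) by auto
  have "length ((psi ^^ nat d) c) = m"
    using length_funpow_psi[OF \<open>c \<noteq> []\<close>] assms(2) by simp
  moreover have "Xset m c' = Xset m ((psi ^^ nat d) c)"
    using Xset_funpow_psi[OF assms(1,2)] assms(5,6) by simp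
  ultimately have c': "c' = (psi ^^ nat d) c"
    using Xset_inject assms(3) by blast
  then have "sum_list c' = sum_list c + int (nat d)"
    using sum_list_funpow_psi[OF \<open>c \<noteq> []\<close>] by simp
  then have "d = 0" using assms(4,6) by simp
  then show ?thesis using c' by simp
qed

lemma inj_on_pi_core:
  assumes "0 < m" shows "inj_on (pi_core m) {c. length c = m \<and> sum_list c = 0}"
proof (rule inj_onI)
  fix c c' assume c: "c \<in> {c. length c = m \<and> sum_list c = 0}"
    and c': "c' \<in> {c. length c = m \<and> sum_list c = 0}"
    and "pi_core m c = pi_core m c'"
  then have "maya_partition (Xset m c) = maya_partition (Xset m c')"
    by (simp add: pi_core_eq_maya_partition)
  then obtain d where d: "Xset m c' = (+) d ` Xset m c"
    using maya_partition_eq_imp_translate maya_set_Xset[OF assms] c c' by blast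
  then have "Xset m c = (+) (- d) ` Xset m c'"
    by (simp add: image_image)
  then show "c = c'"
    using Xset_translate_imp_eq[OF assms, of c c' d] Xset_translate_imp_eq[OF assms, of c' c "- d"] c c' d
    by (cases "0 \<le> d") auto
qed

section \<open>Deleting the runner of the largest bead\<close>

lemma mult_add_less_mult_add_iff:
  fixes q q' :: int
  assumes "j < m" "j' < m"
  shows "q * int m + int j < q' * int m + int j' \<longleftrightarrow> q < q' \<or> q = q' \<and> j < j'"
proof -
  have "q * int m + int j < q' * int m + int j'" if "q < q'" "j < m" for q q' :: int and j j' :: nat
  proof -
    have "q * int m + int j < (q + 1) * int m" using that(2) by (simp add: algebra_simps)
    also have "\<dots> \<le> q' * int m" using that(1) by (intro mult_right_mono) simp_all
    finally show ?thesis by simp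
  qed
  from this[of q q' j j'] this[of q' q j' j] assms show ?thesis
    by (cases q q' rule: linorder_cases) auto
qed

lemma sorted_le_last:
  assumes "sorted xs" "x \<in> set xs" shows "x \<le> last xs"
proof -
  obtain k where k: "k < length xs" "x = xs ! k" using assms(2) by (auto simp: in_set_conv_nth)
  then have "xs \<noteq> []" by auto
  then have "last xs = xs ! (length xs - 1)" by (rule last_conv_nth)
  then show ?thesis using k assms(1) by (simp add: sorted_nth_mono)
qed

locale runner_deletion =
  fixes l i :: nat and a :: "int list"
  assumes two_le_l: "2 \<le> l" and length_a: "length a = l" and i_less: "i < l"
    and le_a_i: "\<And>j. j < l \<Longrightarrow> a ! j \<le> a ! i"
    and less_a_i: "\<And>j. i < j \<Longrightarrow> j < l \<Longrightarrow> a ! j < a ! i"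
begin

definition a' :: "int list" where
  "a' = take i a @ drop (Suc i) a"

definition squeeze :: "nat \<Rightarrow> nat" where
  "squeeze j = (if j < i then j else j - 1)"

text \<open>Order-preserving renumbering of the positions off runner \<open>i\<close> of an \<open>l\<close>-abacus as the
  positions of an \<open>(l - 1)\<close>-abacus.\<close>
definition collapse :: "int \<Rightarrow> int" where
  "collapse y = y div int l * int (l - 1) + int (squeeze (nat (y mod int l)))"

definition off_runner :: "int set" where
  "off_runner = {y. y mod int l \<noteq> int i}"

definition top_bead :: int where
  "top_bead = a ! i * int l + int i"

lemma l_pos: "0 < l" and l_minus_1_pos: "0 < l - 1"
  using two_le_l by simp_all

lemma maya_set_Xset_a: "maya_set (Xset l a)"
  using maya_set_Xset l_pos length_a by blast

lemma length_a': "length a' = l - 1"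
  using length_a i_less by (simp add: a'_def)

lemma squeeze_less: "j < l \<Longrightarrow> j \<noteq> i \<Longrightarrow> squeeze j < l - 1"
  using i_less by (auto simp: squeeze_def)

lemma squeeze_less_iff: "j \<noteq> i \<Longrightarrow> j' \<noteq> i \<Longrightarrow> squeeze j < squeeze j' \<longleftrightarrow> j < j'"
  by (auto simp: squeeze_def)

lemma nth_a'_squeeze: "j < l \<Longrightarrow> j \<noteq> i \<Longrightarrow> a' ! squeeze j = a ! j"
  using length_a i_less by (auto simp: a'_def squeeze_def nth_append)

lemma collapse_eq: "j < l \<Longrightarrow> collapse (q * int l + int j) = q * int (l - 1) + int (squeeze j)"
  by (simp add: collapse_def)

lemma mem_off_runner_iff: "j < l \<Longrightarrow> q * int l + int j \<in> off_runner \<longleftrightarrow> j \<noteq> i"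
  by (simp add: off_runner_def)

lemma off_runner_decomp:
  assumes "y \<in> off_runner" obtains q j where "y = q * int l + int j" "j < l" "j \<noteq> i"
  using int_div_mod_decomp[OF l_pos, of y] assms mem_off_runner_iff by metis

lemma mem_Xset_collapse_iff:
  assumes "y \<in> off_runner" shows "collapse y \<in> Xset (l - 1) a' \<longleftrightarrow> y \<in> Xset l a"
proof -
  obtain q j where y: "y = q * int l + int j" "j < l" "j \<noteq> i"
    using assms by (rule off_runner_decomp)
  have "collapse y \<in> Xset (l - 1) a' \<longleftrightarrow> q \<le> a' ! squeeze j"
    unfolding y(1) collapse_eq[OF y(2)] by (rule mem_Xset_iff[OF squeeze_less[OF y(2,3)]])
  also have "\<dots> \<longleftrightarrow> y \<in> Xset l a"
    using y by (simp add: nth_a'_squeeze mem_Xset_iff)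
  finally show ?thesis .
qed

lemma collapse_less_iff:
  assumes "y \<in> off_runner" "y' \<in> off_runner" shows "collapse y < collapse y' \<longleftrightarrow> y < y'"
proof -
  obtain q j where y: "y = q * int l + int j" "j < l" "j \<noteq> i"
    using assms(1) by (rule off_runner_decomp)
  obtain q' j' where y': "y' = q' * int l + int j'" "j' < l" "j' \<noteq> i"
    using assms(2) by (rule off_runner_decomp)
  have "collapse y < collapse y' \<longleftrightarrow> q < q' \<or> q = q' \<and> squeeze j < squeeze j'"
    unfolding y(1) y'(1) collapse_eq[OF y(2)] collapse_eq[OF y'(2)]
    by (rule mult_add_less_mult_add_iff[OF squeeze_less[OF y(2,3)] squeeze_less[OF y'(2,3)]])
  also have "\<dots> \<longleftrightarrow> y < y'"
    using y y' by (simp add: squeeze_less_iff mult_add_less_mult_add_iff)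
  finally show ?thesis .
qed

lemma inj_on_collapse: "inj_on collapse off_runner"
proof (rule linorder_inj_onI)
  fix y y' assume "y < y'" "y \<in> off_runner" "y' \<in> off_runner"
  then show "collapse y \<noteq> collapse y'" using collapse_less_iff by (metis less_irrefl)
qed auto

lemma collapse_off_runner: "collapse ` off_runner = UNIV"
proof -
  have "z \<in> collapse ` off_runner" for z
  proof -
    obtain q s where z: "z = q * int (l - 1) + int s" "s < l - 1"
      using int_div_mod_decomp[OF l_minus_1_pos] .
    define j where "j = (if s < i then s else Suc s)"
    have "j < l" "j \<noteq> i" "squeeze j = s"
      using z(2) by (auto simp: j_def squeeze_def)
    then show ?thesis
      using z(1) collapse_eq mem_off_runner_iff by (metis image_eqI)
  qed
  then show ?thesis by blast
qed

lemma le_top_bead: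
  assumes "y \<in> Xset l a" shows "y \<le> top_bead"
proof -
  obtain r j where y: "y = r * int l + int j" "j < l" "r \<le> a ! j"
    using assms by (auto simp: Xset_eq)
  then have "\<not> top_bead < y"
    using le_a_i[of j] less_a_i[of j] i_less by (auto simp: top_bead_def mult_add_less_mult_add_iff)
  then show ?thesis by simp
qed

lemma top_bead_mem_Xset: "top_bead \<in> Xset l a"
  by (simp add: top_bead_def mem_Xset_iff i_less)

lemma top_bead_mod: "top_bead mod int l = int i"
  using i_less by (simp add: top_bead_def)

lemma top_bead_less_gap_on_runner:
  assumes "y \<notin> Xset l a" "y \<notin> off_runner" shows "top_bead < y"
proof -
  obtain q j where y: "y = q * int l + int j" "j < l"
    using int_div_mod_decomp[OF l_pos] .
  then have "j = i" using assms(2) mem_off_runner_iff by blast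
  then show ?thesis
    using assms(1) y i_less by (auto simp: top_bead_def mem_Xset_iff mult_add_less_mult_add_iff)
qed

lemma gaps_below_collapse:
  assumes "x \<in> Xset l a" "x \<in> off_runner"
  shows "gaps_below (Xset (l - 1) a') (collapse x) = gaps_below (Xset l a) x"
proof -
  let ?G = "{y. y \<notin> Xset l a \<and> y < x}"
  have gaps_off_runner: "?G \<subseteq> off_runner"
    using le_top_bead[OF assms(1)] top_bead_less_gap_on_runner by force
  have "{z. z \<notin> Xset (l - 1) a' \<and> z < collapse x} = collapse ` ?G"
  proof (rule set_eqI)
    fix z
    obtain y where y: "y \<in> off_runner" "z = collapse y"
      using collapse_off_runner by (metis UNIV_I imageE)
    have "z \<in> collapse ` ?G \<longleftrightarrow> y \<in> ?G"
      using y(2) inj_on_image_mem_iff[OF inj_on_collapse y(1) gaps_off_runner] by simp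
    then show "z \<in> {z. z \<notin> Xset (l - 1) a' \<and> z < collapse x} \<longleftrightarrow> z \<in> collapse ` ?G"
      using y(2) mem_Xset_collapse_iff[OF y(1)] collapse_less_iff[OF y(1) assms(2)] by simp
  qed
  then show ?thesis
    unfolding gaps_below_def
    using inj_on_subset[OF inj_on_collapse gaps_off_runner] by (simp add: card_image)
qed

lemma active_beads_collapse:
  "active_beads (Xset (l - 1) a') = collapse ` (active_beads (Xset l a) \<inter> off_runner)"
proof (rule set_eqI)
  fix z
  obtain y where y: "y \<in> off_runner" "z = collapse y"
    using collapse_off_runner by (metis UNIV_I imageE)
  have "z \<in> collapse ` (active_beads (Xset l a) \<inter> off_runner) \<longleftrightarrow> y \<in> active_beads (Xset l a)"
    using y inj_on_image_mem_iff[OF inj_on_collapse y(1), of "active_beads (Xset l a) \<inter> off_runner"]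
    by auto
  moreover have "z \<in> active_beads (Xset (l - 1) a') \<longleftrightarrow> y \<in> active_beads (Xset l a)"
    using y(2) mem_Xset_collapse_iff[OF y(1)] gaps_below_collapse[OF _ y(1)]
    by (auto simp: active_beads_def)
  ultimately show "z \<in> active_beads (Xset (l - 1) a')
      \<longleftrightarrow> z \<in> collapse ` (active_beads (Xset l a) \<inter> off_runner)"
    by simp
qed

lemma last_active_bead_list:
  assumes "b \<in> set (active_bead_list (Xset l a))"
  shows "last (active_bead_list (Xset l a)) = top_bead"
proof -
  let ?S = "Xset l a"
  note maya = maya_set_Xset_a
  have set_bs: "set (active_bead_list ?S) = active_beads ?S"
    by (simp add: active_bead_list_def finite_active_beads[OF maya])
  then have "last (active_bead_list ?S) \<in> active_beads ?S"
    using assms by (metis empty_iff last_in_set list.set(1))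
  then have "last (active_bead_list ?S) \<le> top_bead"
    using le_top_bead by (simp add: active_beads_def)
  moreover have "top_bead \<in> active_beads ?S"
    using assms set_bs le_top_bead[of b] top_bead_mem_Xset gaps_below_mono[OF maya, of b top_bead]
    by (auto simp: active_beads_def)
  then have "top_bead \<le> last (active_bead_list ?S)"
    using set_bs by (simp add: sorted_le_last active_bead_list_def)
  ultimately show ?thesis by simp
qed

lemma sum_list_a': "sum_list a' = sum_list a - a ! i"
proof -
  have "a = take i a @ a ! i # drop (Suc i) a"
    using length_a i_less by (simp add: id_take_nth_drop)
  then have "sum_list a = sum_list (take i a) + a ! i + sum_list (drop (Suc i) a)"
    by (metis sum_list_append sum_list.Cons add.assoc)
  then show ?thesis by (simp add: a'_def)
qed

lemma nonneg_a_i: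
  assumes "sum_list a = 0" shows "0 \<le> a ! i"
proof -
  have "sum_list a \<le> sum_list (map (\<lambda>_. a ! i) a)"
    using sum_list_mono[of a "\<lambda>x. x" "\<lambda>_. a ! i"] le_a_i length_a
    by (auto simp: in_set_conv_nth)
  then have "0 \<le> int l * a ! i" using assms length_a by (simp add: sum_list_triv)
  then show ?thesis using l_pos by (simp add: zero_le_mult_iff)
qed

abbreviation beads_off_runner :: "int list" where
  "beads_off_runner \<equiv> filter (\<lambda>b. b \<in> off_runner) (active_bead_list (Xset l a))"

lemma Phi_pi_core_eq: "Phi l (pi_core l a) = rev (map (gaps_below (Xset l a)) beads_off_runner)"
proof -
  let ?bs = "active_bead_list (Xset l a)"
  obtain g where first_gap: "maya_first_gap (Xset l a) g"
    using exists_first_gap[OF maya_set_Xset_a] maya_set_Xset_a maya_first_gap.intro by metis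
  have "filter (\<lambda>b. b mod int l \<noteq> last ?bs mod int l) ?bs = beads_off_runner"
    using last_active_bead_list top_bead_mod by (auto simp: off_runner_def intro: filter_cong)
  then show ?thesis
    using maya_first_gap.Phi_maya_partition[OF first_gap l_pos]
    by (simp add: pi_core_eq_maya_partition)
qed

lemma pi_core_a'_eq: "pi_core (l - 1) a' = rev (map (gaps_below (Xset l a)) beads_off_runner)"
proof -
  let ?S = "Xset l a" and ?Y = "Xset (l - 1) a'"
  note maya = maya_set_Xset_a
  have sorted: "sorted (map (gaps_below ?S) beads_off_runner)"
    using sorted_gaps_below_active_bead_list[OF maya] by (rule sorted_filter)
  have "set beads_off_runner = active_beads ?S \<inter> off_runner"
    by (auto simp: active_bead_list_def finite_active_beads[OF maya])
  then have "mset (map (gaps_below ?S) beads_off_runner)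
      = image_mset (gaps_below ?S) (mset_set (active_beads ?S \<inter> off_runner))"
    by (simp flip: mset_set_set add: active_bead_list_def)
  also have "\<dots> = image_mset (gaps_below ?Y \<circ> collapse) (mset_set (active_beads ?S \<inter> off_runner))"
  proof (rule image_mset_cong)
    fix x assume "x \<in># mset_set (active_beads ?S \<inter> off_runner)"
    then have "x \<in> ?S" "x \<in> off_runner"
      using finite_active_beads[OF maya] by (auto simp: active_beads_def)
    then show "gaps_below ?S x = (gaps_below ?Y \<circ> collapse) x"
      using gaps_below_collapse by simp
  qed
  also have "\<dots> = image_mset (gaps_below ?Y) (mset_set (active_beads ?Y))"
    using inj_on_subset[OF inj_on_collapse] active_beads_collapse
    by (simp add: image_mset_mset_set flip: multiset.map_comp)
  finally show ?thesis
    using sorted by (simp add: pi_core_eq_maya_partition maya_partition_eqI)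
qed

lemma Phi_pi_core: "Phi l (pi_core l a) = pi_core (l - 1) a'"
  by (simp only: Phi_pi_core_eq pi_core_a'_eq)

end

lemma runner_deletion_last_max:
  assumes "2 \<le> l" "length a = l"
  shows "runner_deletion l (Max {j. j < l \<and> a ! j = Max (set a)}) a"
proof -
  let ?J = "{j. j < l \<and> a ! j = Max (set a)}"
  have "Max (set a) \<in> set a" using assms by (intro Max_in) auto
  then have "?J \<noteq> {}" using assms(2) by (auto simp: in_set_conv_nth)
  then have i: "Max ?J \<in> ?J" by (intro Max_in) simp_all
  have "a ! j \<le> a ! Max ?J" if "j < l" for j
    using i that assms(2) by simp
  moreover have "a ! j < a ! Max ?J" if "Max ?J < j" "j < l" for j
    using i that calculation[OF that(2)] Max_ge[of ?J j] by fastforce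
  ultimately show ?thesis
    using assms i by unfold_locales auto
qed

theorem mainTheorem1:
  fixes l :: nat and a :: "int list"
  assumes "l \<ge> 2" and "length a = l" and "sum_list a = 0"
  defines "lam \<equiv> pi_core l a"
  defines "i \<equiv> Max {j. j < l \<and> a ! j = Max (set a)}"
  shows "the_inv_into {c. length c = l - 1 \<and> sum_list c = 0} (pi_core (l - 1)) (Phi l lam)
         = (psi ^^ nat (a ! i)) (take i a @ drop (Suc i) a)"
proof -
  interpret runner_deletion l i a
    unfolding i_def using assms(1,2) by (rule runner_deletion_last_max)
  have "a' \<noteq> []" using length_a' two_le_l by auto
  have "0 \<le> a ! i" using assms(3) by (rule nonneg_a_i)
  define v where "v = (psi ^^ nat (a ! i)) a'"
  have v: "v \<in> {c. length c = l - 1 \<and> sum_list c = 0}"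
    using length_funpow_psi[OF \<open>a' \<noteq> []\<close>] sum_list_funpow_psi[OF \<open>a' \<noteq> []\<close>]
      length_a' sum_list_a' assms(3) \<open>0 \<le> a ! i\<close> by (simp add: v_def)
  have "pi_core (l - 1) v = pi_core (l - 1) a'"
    using Xset_funpow_psi[OF l_minus_1_pos length_a']
    by (simp add: v_def pi_core_eq_maya_partition maya_partition_translate)
  then have "pi_core (l - 1) v = Phi l lam"
    by (simp add: lam_def Phi_pi_core)
  then show ?thesis
    using the_inv_into_f_f[OF inj_on_pi_core[OF l_minus_1_pos] v] by (simp add: v_def a'_def)
qed

end
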